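(* Let $\boldsymbol u_1,\ldots,\boldsymbol u_p\in L^2(\Omega,\mathbb R^n)$. Define recursively $$\boldsymbol v_1=\boldsymbol u_1,\qquad \boldsymbol v_i=\boldsymbol u_i-\sum_{k=1}^{i-1}Z_{ik}\boldsymbol v_k\quad(i=2,\ldots,p),$$ where $$Z_{ik}=\mathbb E_{u_iv_k}\mathbb E_{v_kv_k}^{\dagger}+A_{ik}\big(I-\mathbb E_{v_kv_k}\mathbb E_{v_kv_k}^{\dagger}\big)$$ with arbitrary matrices $A_{ik}\in\mathbb R^{n\times n}$ (no invertibility of $\mathbb E_{v_kv_k}$ is assumed). Then $\boldsymbol v_1,\ldots,\boldsymbol v_p$ are pairwise orthogonal: $\mathbb E_{v_iv_j}=\mathbb O$ for all $i\neq j$.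
   Context: $(\Omega,\Sigma,\mu)$ is a probability space and $E[\cdot]$ denotes expectation. For random vectors $\boldsymbol g,\boldsymbol h$, $\mathbb E_{gh}:=E[\boldsymbol g\boldsymbol h^T]-E[\boldsymbol g]E[\boldsymbol h]^T$. $M^\dagger$ denotes the Moore–Penrose pseudo-inverse of a matrix $M$. Matrices act on random vectors pointwise in $\omega$. *)

theory Defs
  imports "HOL-Probability.Probability"
begin

definition pinv :: "real^'n^'n \<Rightarrow> real^'n^'n" where
  "pinv A = (THE X. A ** X ** A = A \<and> X ** A ** X = X \<and>
                    transpose (A ** X) = A ** X \<and> transpose (X ** A) = X ** A)"

definition vexp :: "'a measure \<Rightarrow> ('a \<Rightarrow> real^'n) \<Rightarrow> real^'n" where
  "vexp M g = (\<chi> i. integral\<^sup>L M (\<lambda>\<omega>. g \<omega> $ i))"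

definition covm :: "'a measure \<Rightarrow> ('a \<Rightarrow> real^'n) \<Rightarrow> ('a \<Rightarrow> real^'n) \<Rightarrow> real^'n^'n" where
  "covm M g h = (\<chi> i j. integral\<^sup>L M (\<lambda>\<omega>. g \<omega> $ i * h \<omega> $ j))
               - (\<chi> i j. vexp M g $ i * vexp M h $ j)"

definition L2vec :: "'a measure \<Rightarrow> ('a \<Rightarrow> real^'n) \<Rightarrow> bool" where
  "L2vec M g \<longleftrightarrow> g \<in> borel_measurable M \<and> integrable M (\<lambda>\<omega>. (norm (g \<omega>))\<^sup>2)"

end

theory Submission
  imports Defs
begin

(* The Moore-Penrose inverse C\<^sup>+ exists: it inverts C between the row and the column space of C,
   which are the ranges of two orthogonal projection matrices. Hence C C\<^sup>+ C = C.
   For a covariance matrix C = E_ww the quadratic form x\<^sup>T C x is the variance of x\<^sup>T w, so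
   C x = 0 makes x\<^sup>T w almost surely constant and therefore uncorrelated with everything:
   E_uw x = 0 for every u. Thus E_uw C\<^sup>+ C = E_uw, i.e. every Z = E_uw C\<^sup>+ + A (I - C C\<^sup>+)
   solves Z C = E_uw. If v_1, ..., v_(i-1) are pairwise uncorrelated, bilinearity of the
   covariance gives E_(v_i v_j) = E_(u_i v_j) - Z_ij E_(v_j v_j) = 0 for j < i, and induction
   on i finishes the proof. *)

section \<open>Orthogonal projections and the Moore--Penrose inverse\<close>

lemma matrix_vector_mult_inner_transpose:
  fixes A :: "real^'n^'m"
  shows "(A *v x) \<bullet> y = x \<bullet> (transpose A *v y)"
  by (metis dot_lmul_matrix inner_commute transpose_matrix_vector)

lemma orthogonal_projection_matrix_exists:
  fixes S :: "(real^'n) set"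
  assumes "subspace S"
  obtains P :: "real^'n^'n"
  where "\<And>x. P *v x \<in> S" "\<And>y. y \<in> S \<Longrightarrow> P *v y = y" "transpose P = P"
proof -
  obtain B where B: "pairwise orthogonal B" "\<And>b. b \<in> B \<Longrightarrow> norm b = 1" "independent B"
    "span B = S"
    using orthonormal_basis_subspace[OF assms] by metis
  have "finite B"
    using B(3) by (rule independent_imp_finite)
  define p where "p x = (\<Sum>b\<in>B. (x \<bullet> b) *\<^sub>R b)" for x
  have "linear p"
    by (rule linearI) (simp_all add: p_def inner_add_left scaleR_add_left sum.distrib scaleR_sum_right)
  then have Pv: "matrix p *v x = p x" for x
    by (simp add: matrix_works)
  have "adjoint p = p"
    by (rule adjoint_unique) (simp add: p_def inner_sum_left inner_sum_right inner_commute mult.commute)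
  show thesis
  proof
    show "matrix p *v x \<in> S" for x
      unfolding Pv p_def B(4)[symmetric] by (intro span_sum span_scale span_base)
    show "matrix p *v y = y" if "y \<in> S" for y
      using orthonormal_basis_expand[OF B(1,2) _ \<open>finite B\<close>] that B(4) by (simp add: Pv p_def)
    show "transpose (matrix p) = matrix p"
      using matrix_adjoint[OF \<open>linear p\<close>] \<open>adjoint p = p\<close> by simp
  qed
qed

lemma orthogonal_projection_residual_orthogonal:
  fixes P :: "real^'n^'n"
  assumes "\<And>y. y \<in> S \<Longrightarrow> P *v y = y" "transpose P = P" "w \<in> S"
  shows "(x - P *v x) \<bullet> w = 0"
  using assms by (simp add: inner_diff_left matrix_vector_mult_inner_transpose)

lemma matrix_vector_mult_eq_0_iff_orthogonal_row_space:
  fixes A :: "real^'n^'m"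
  shows "A *v x = 0 \<longleftrightarrow> (\<forall>y. x \<bullet> (transpose A *v y) = 0)"
  by (metis inner_eq_zero_iff inner_zero_left matrix_vector_mult_inner_transpose)

definition penrose :: "real^'n^'m \<Rightarrow> real^'m^'n \<Rightarrow> bool" where
  "penrose A X \<longleftrightarrow> A ** X ** A = A \<and> X ** A ** X = X \<and>
                    transpose (A ** X) = A ** X \<and> transpose (X ** A) = X ** A"

lemma penrose_unique:
  assumes X: "penrose A X" and Y: "penrose A Y"
  shows "X = Y"
proof -
  let ?T = transpose
  have x: "A ** X ** A = A" "X ** A ** X = X" "?T X ** ?T A = A ** X" "?T A ** ?T X = X ** A"
    using X unfolding penrose_def by (auto simp: matrix_transpose_mul)
  have y: "A ** Y ** A = A" "Y ** A ** Y = Y" "?T Y ** ?T A = A ** Y" "?T A ** ?T Y = Y ** A"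
    using Y unfolding penrose_def by (auto simp: matrix_transpose_mul)
  have A_T: "?T A = ?T A ** (A ** Y)" "?T A = (X ** A) ** ?T A"
    by (metis x(1,4) y(1,3) matrix_transpose_mul matrix_mul_assoc)+
  have "X = X ** (?T X ** ?T A)"
    by (metis x(2,3) matrix_mul_assoc)
  also have "\<dots> = X ** A ** Y"
    by (metis A_T(1) x(2,3) matrix_mul_assoc)
  also have "\<dots> = X ** A ** (?T A ** ?T Y) ** Y"
    by (metis y(2,4) matrix_mul_assoc)
  also have "\<dots> = ?T A ** ?T Y ** Y"
    by (metis A_T(2) matrix_mul_assoc)
  also have "\<dots> = Y"
    by (metis y(2,4))
  finally show ?thesis .
qed

lemma matrix_vector_mult_inj_on_row_space:
  fixes A :: "real^'n^'m"
  shows "inj_on (\<lambda>x. A *v x) (range (\<lambda>y. transpose A *v y))"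
proof -
  have "subspace (range (\<lambda>y. transpose A *v y))"
    by (rule real_vector.linear_subspace_image[OF matrix_vector_mul_linear subspace_UNIV])
  then show ?thesis
  proof (rule real_vector.linear_inj_on_iff_eq_0[THEN iffD2, OF matrix_vector_mul_linear],
      intro ballI impI)
    fix x assume "x \<in> range (\<lambda>y. transpose A *v y)" "A *v x = 0"
    then have "x \<bullet> x = 0"
      unfolding matrix_vector_mult_eq_0_iff_orthogonal_row_space by blast
    then show "x = 0"
      by simp
  qed
qed

lemma matrix_vector_mult_projection_row_space:
  fixes A :: "real^'n^'m"
  assumes "\<And>y. y \<in> range (\<lambda>y. transpose A *v y) \<Longrightarrow> P *v y = y" "transpose P = P"
  shows "A *v (P *v x) = A *v x"
proof -
  have "A *v (x - P *v x) = 0"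
    unfolding matrix_vector_mult_eq_0_iff_orthogonal_row_space
    using orthogonal_projection_residual_orthogonal[OF assms] by blast
  then show ?thesis
    by (simp add: matrix_vector_mult_diff_distrib)
qed

lemma penrose_exists:
  fixes A :: "real^'n^'m"
  shows "\<exists>X. penrose A X"
proof -
  let ?R = "range (\<lambda>y. transpose A *v y)" and ?C = "range (\<lambda>x. A *v x)"
  have R: "subspace ?R" and C: "subspace ?C"
    by (rule real_vector.linear_subspace_image[OF matrix_vector_mul_linear subspace_UNIV])+
  obtain PR where PR: "\<And>x. PR *v x \<in> ?R" "\<And>y. y \<in> ?R \<Longrightarrow> PR *v y = y" "transpose PR = PR"
    using orthogonal_projection_matrix_exists[OF R] by blast
  obtain PC where PC: "\<And>x. PC *v x \<in> ?C" "\<And>y. y \<in> ?C \<Longrightarrow> PC *v y = y" "transpose PC = PC"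
    using orthogonal_projection_matrix_exists[OF C] by blast
  obtain g where g: "range g \<subseteq> ?R" "linear g" "\<And>x. x \<in> ?R \<Longrightarrow> g (A *v x) = x"
    using real_vector.linear_exists_left_inverse_on[OF matrix_vector_mul_linear R
        matrix_vector_mult_inj_on_row_space] by auto
  have A_PR: "A *v (PR *v x) = A *v x" for x
    using matrix_vector_mult_projection_row_space[OF PR(2,3)] .
  have g_A: "g (A *v x) = PR *v x" for x
    by (metis A_PR PR(1) g(3))
  define X where "X = matrix (\<lambda>z. g (PC *v z))"
  have Xv: "X *v z = g (PC *v z)" for z
    unfolding X_def using g(2) by (simp add: matrix_works linear_compose[unfolded o_def])
  have AX: "A ** X = PC"
  proof (rule matrix_eq[THEN iffD2, rule_format])
    fix z
    obtain x where "PC *v z = A *v x"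
      using PC(1) by blast
    then show "(A ** X) *v z = PC *v z"
      by (simp add: matrix_vector_mul_assoc[symmetric] Xv g_A A_PR)
  qed
  have XA: "X ** A = PR"
    by (simp add: matrix_eq matrix_vector_mul_assoc[symmetric] Xv PC(2) g_A)
  have "X ** A ** X = X"
  proof (rule matrix_eq[THEN iffD2, rule_format])
    fix z
    have "X *v z \<in> ?R"
      using g(1) by (auto simp: Xv)
    then show "(X ** A ** X) *v z = X *v z"
      by (simp add: XA matrix_vector_mul_assoc[symmetric] PR(2))
  qed
  moreover have "A ** X ** A = A"
    by (simp add: matrix_eq AX matrix_vector_mul_assoc[symmetric] PC(2))
  ultimately have "penrose A X"
    by (simp add: penrose_def AX XA PC(3) PR(3))
  then show ?thesis ..
qed

lemma pinv_penrose: "penrose A (pinv A)"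
proof -
  obtain X where "penrose A X"
    using penrose_exists by blast
  moreover have "pinv A = X"
    unfolding pinv_def penrose_def[symmetric] using calculation penrose_unique by blast
  ultimately show ?thesis by simp
qed

lemma matrix_mult_pinv_mult: "A ** pinv A ** A = A"
  using pinv_penrose unfolding penrose_def by blast

lemma pinv_general_solution_mult:
  fixes C D :: "real^'n^'n"
  assumes "D ** pinv C ** C = D"
  shows "(D ** pinv C + B ** (mat 1 - C ** pinv C)) ** C = D"
proof (rule matrix_eq[THEN iffD2, rule_format])
  fix y
  have "C *v (pinv C *v (C *v y)) = C *v y" "D *v (pinv C *v (C *v y)) = D *v y"
    using matrix_mult_pinv_mult[of C] assms by (simp_all add: matrix_vector_mul_assoc matrix_mul_assoc)
  then show "((D ** pinv C + B ** (mat 1 - C ** pinv C)) ** C) *v y = D *v y"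
    by (simp add: matrix_vector_mul_assoc[symmetric] matrix_vector_mult_add_rdistrib
        matrix_vector_mult_diff_rdistrib)
qed

section \<open>Covariance of square-integrable random variables\<close>

definition square_integrable :: "'a measure \<Rightarrow> ('a \<Rightarrow> real) \<Rightarrow> bool" where
  "square_integrable M a \<longleftrightarrow> a \<in> borel_measurable M \<and> integrable M (\<lambda>\<omega>. (a \<omega>)\<^sup>2)"

definition cov :: "'a measure \<Rightarrow> ('a \<Rightarrow> real) \<Rightarrow> ('a \<Rightarrow> real) \<Rightarrow> real" where
  "cov M a b = (\<integral>\<omega>. a \<omega> * b \<omega> \<partial>M) - (\<integral>\<omega>. a \<omega> \<partial>M) * (\<integral>\<omega>. b \<omega> \<partial>M)"

lemma square_integrable_integrable_mult:
  assumes "square_integrable M a" "square_integrable M b"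
  shows "integrable M (\<lambda>\<omega>. a \<omega> * b \<omega>)"
proof (rule Bochner_Integration.integrable_bound)
  show "integrable M (\<lambda>\<omega>. (a \<omega>)\<^sup>2 + (b \<omega>)\<^sup>2)"
    using assms unfolding square_integrable_def by auto
  show "AE \<omega> in M. norm (a \<omega> * b \<omega>) \<le> norm ((a \<omega>)\<^sup>2 + (b \<omega>)\<^sup>2)"
  proof (intro AE_I2)
    fix \<omega>
    have "2 * \<bar>a \<omega>\<bar> * \<bar>b \<omega>\<bar> \<le> (a \<omega>)\<^sup>2 + (b \<omega>)\<^sup>2"
      using sum_squares_bound[of "\<bar>a \<omega>\<bar>" "\<bar>b \<omega>\<bar>"] by simp
    moreover have "0 \<le> \<bar>a \<omega>\<bar> * \<bar>b \<omega>\<bar>"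
      by simp
    ultimately have "\<bar>a \<omega>\<bar> * \<bar>b \<omega>\<bar> \<le> (a \<omega>)\<^sup>2 + (b \<omega>)\<^sup>2"
      by linarith
    then show "norm (a \<omega> * b \<omega>) \<le> norm ((a \<omega>)\<^sup>2 + (b \<omega>)\<^sup>2)"
      by (simp add: abs_mult)
  qed
qed (use assms in \<open>simp add: square_integrable_def borel_measurable_times\<close>)

lemma square_integrable_add:
  assumes "square_integrable M a" "square_integrable M b"
  shows "square_integrable M (\<lambda>\<omega>. a \<omega> + b \<omega>)"
proof -
  have "integrable M (\<lambda>\<omega>. (a \<omega>)\<^sup>2 + (b \<omega>)\<^sup>2 + 2 * (a \<omega> * b \<omega>))"
    using square_integrable_integrable_mult[OF assms] assms unfolding square_integrable_def by auto
  then show ?thesis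
    using assms unfolding square_integrable_def by (simp add: power2_sum ac_simps borel_measurable_add)
qed

lemma square_integrable_cmult: "square_integrable M a \<Longrightarrow> square_integrable M (\<lambda>\<omega>. c * a \<omega>)"
  unfolding square_integrable_def by (simp add: power_mult_distrib borel_measurable_times)

lemma square_integrable_diff:
  "square_integrable M a \<Longrightarrow> square_integrable M b \<Longrightarrow> square_integrable M (\<lambda>\<omega>. a \<omega> - b \<omega>)"
  using square_integrable_add[of M a "\<lambda>\<omega>. (-1) * b \<omega>"] square_integrable_cmult[of M b "-1"]
  by simp

lemma square_integrable_sum:
  "(\<And>k. k \<in> K \<Longrightarrow> square_integrable M (f k)) \<Longrightarrow> square_integrable M (\<lambda>\<omega>. \<Sum>k\<in>K. f k \<omega>)"
proof (induction K rule: infinite_finite_induct)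
  case (insert k K)
  then show ?case
    by (simp add: square_integrable_add)
qed (simp_all add: square_integrable_def)

lemma cov_commute: "cov M a b = cov M b a"
  unfolding cov_def by (simp add: mult.commute)

lemma cov_cmult_left: "cov M (\<lambda>\<omega>. c * a \<omega>) b = c * cov M a b"
  unfolding cov_def by (simp add: algebra_simps)

context prob_space
begin

lemma square_integrable_integrable: "square_integrable M a \<Longrightarrow> integrable M a"
  unfolding square_integrable_def by (blast intro: square_integrable_imp_integrable)

lemma cov_diff_left:
  assumes "square_integrable M a" "square_integrable M b" "square_integrable M c"
  shows "cov M (\<lambda>\<omega>. a \<omega> - b \<omega>) c = cov M a c - cov M b c"
  using assms square_integrable_integrable_mult[of M _ c] square_integrable_integrable
  unfolding cov_def by (simp add: left_diff_distrib algebra_simps)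

lemma cov_sum_left:
  assumes "\<And>k. k \<in> K \<Longrightarrow> square_integrable M (f k)" "square_integrable M b"
  shows "cov M (\<lambda>\<omega>. \<Sum>k\<in>K. f k \<omega>) b = (\<Sum>k\<in>K. cov M (f k) b)"
  using assms square_integrable_integrable_mult[of M _ b] square_integrable_integrable
  unfolding cov_def by (simp add: sum_distrib_right sum_subtractf)

lemma cov_eq_integral_centered:
  assumes "square_integrable M a" "square_integrable M b"
  shows "cov M a b = (\<integral>\<omega>. (a \<omega> - expectation a) * (b \<omega> - expectation b) \<partial>M)"
proof -
  have "integrable M a" "integrable M b" "integrable M (\<lambda>\<omega>. a \<omega> * b \<omega>)"
    using assms by (auto intro: square_integrable_integrable square_integrable_integrable_mult)
  moreover have "(\<lambda>\<omega>. (a \<omega> - expectation a) * (b \<omega> - expectation b))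
      = (\<lambda>\<omega>. (a \<omega> * b \<omega> - expectation b * a \<omega>) - (expectation a * b \<omega> - expectation a * expectation b))"
    by (simp add: fun_eq_iff algebra_simps)
  ultimately show ?thesis
    unfolding cov_def by (simp add: prob_space)
qed

lemma cov_eq_0_if_cov_self_eq_0:
  assumes a: "square_integrable M a" and b: "square_integrable M b" and "cov M b b = 0"
  shows "cov M a b = 0"
proof -
  have [measurable]: "a \<in> borel_measurable M" "b \<in> borel_measurable M"
    using a b unfolding square_integrable_def by auto
  let ?b0 = "\<lambda>\<omega>. (b \<omega> - expectation b) * (b \<omega> - expectation b)"
  have "integrable M ?b0"
    using square_integrable_diff[OF b, of "\<lambda>_. expectation b"]
    by (simp add: square_integrable_def power2_eq_square)
  moreover have "integral\<^sup>L M ?b0 = 0"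
    using \<open>cov M b b = 0\<close> cov_eq_integral_centered[OF b b] by simp
  ultimately have "AE \<omega> in M. ?b0 \<omega> = 0"
    using integral_nonneg_eq_0_iff_AE[of M ?b0] by simp
  then have "AE \<omega> in M. (a \<omega> - expectation a) * (b \<omega> - expectation b) = 0"
    by eventually_elim simp
  then have "(\<integral>\<omega>. (a \<omega> - expectation a) * (b \<omega> - expectation b) \<partial>M) = (\<integral>\<omega>. 0 \<partial>M)"
    by (intro integral_cong_AE) measurable
  then show ?thesis
    using cov_eq_integral_centered[OF a b] by simp
qed

end

section \<open>Covariance matrices\<close>

lemma L2vec_iff_components: "L2vec M g \<longleftrightarrow> (\<forall>i. square_integrable M (\<lambda>\<omega>. g \<omega> $ i))"
proof
  assume g: "L2vec M g"
  then have [measurable]: "g \<in> borel_measurable M"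
    by (simp add: L2vec_def)
  show "\<forall>i. square_integrable M (\<lambda>\<omega>. g \<omega> $ i)"
  proof
    fix i
    have meas: "(\<lambda>\<omega>. g \<omega> $ i) \<in> borel_measurable M"
      unfolding cart_eq_inner_axis by measurable
    have bound: "(g \<omega> $ i)\<^sup>2 \<le> (norm (g \<omega>))\<^sup>2" for \<omega>
      using component_le_norm_cart[of "g \<omega>" i] abs_le_square_iff by force
    have "integrable M (\<lambda>\<omega>. (g \<omega> $ i)\<^sup>2)"
    proof (rule Bochner_Integration.integrable_bound)
      show "integrable M (\<lambda>\<omega>. (norm (g \<omega>))\<^sup>2)"
        using g by (simp add: L2vec_def)
      show "AE \<omega> in M. norm ((g \<omega> $ i)\<^sup>2) \<le> norm ((norm (g \<omega>))\<^sup>2)"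
        using bound by (intro AE_I2) simp
    qed (use meas in measurable)
    with meas show "square_integrable M (\<lambda>\<omega>. g \<omega> $ i)"
      by (simp add: square_integrable_def)
  qed
next
  assume c: "\<forall>i. square_integrable M (\<lambda>\<omega>. g \<omega> $ i)"
  then have "g \<in> borel_measurable M"
    unfolding borel_measurable_euclidean_space[where f = g] Basis_vec_def
    by (auto simp: inner_axis square_integrable_def)
  moreover have "(\<lambda>\<omega>. (norm (g \<omega>))\<^sup>2) = (\<lambda>\<omega>. \<Sum>i\<in>UNIV. (g \<omega> $ i)\<^sup>2)"
    by (simp add: norm_vec_def L2_set_def sum_nonneg)
  ultimately show "L2vec M g"
    using c by (simp add: L2vec_def square_integrable_def)
qed

lemma L2vec_diff_sum:
  assumes "L2vec M u" "\<And>k. k \<in> K \<Longrightarrow> L2vec M (F k)"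
  shows "L2vec M (\<lambda>\<omega>. u \<omega> - (\<Sum>k\<in>K. B k *v F k \<omega>))"
  using assms unfolding L2vec_iff_components
  by (auto simp: sum_component matrix_vector_mult_def
      intro!: square_integrable_diff square_integrable_sum square_integrable_cmult)

lemma square_integrable_inner:
  assumes "L2vec M w"
  shows "square_integrable M (\<lambda>\<omega>. x \<bullet> w \<omega>)"
  using assms unfolding L2vec_iff_components inner_vec_def
  by (auto intro!: square_integrable_sum square_integrable_cmult)

definition covm_orthogonal :: "'a measure \<Rightarrow> ('i \<Rightarrow> 'a \<Rightarrow> real^'n) \<Rightarrow> 'i set \<Rightarrow> bool" where
  "covm_orthogonal M w K \<longleftrightarrow>
     (\<forall>k \<in> K. L2vec M (w k)) \<and> (\<forall>k \<in> K. \<forall>l \<in> K. k \<noteq> l \<longrightarrow> covm M (w k) (w l) = 0)"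

lemma covm_nth: "covm M g h $ i $ j = cov M (\<lambda>\<omega>. g \<omega> $ i) (\<lambda>\<omega>. h \<omega> $ j)"
  unfolding covm_def vexp_def cov_def by simp

lemma covm_eq_0_commute: "covm M g h = 0 \<longleftrightarrow> covm M h g = 0"
proof -
  have "covm M h g $ j $ i = covm M g h $ i $ j" for i j
    unfolding covm_nth by (rule cov_commute)
  then show ?thesis
    by (metis vec_eq_iff zero_index)
qed

context prob_space
begin

lemma covm_diff_sum_left:
  assumes u: "L2vec M u" and F: "\<And>k. k \<in> K \<Longrightarrow> L2vec M (F k)" and h: "L2vec M h"
  shows "covm M (\<lambda>\<omega>. u \<omega> - (\<Sum>k\<in>K. B k *v F k \<omega>)) h
       = covm M u h - (\<Sum>k\<in>K. B k ** covm M (F k) h)"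
proof -
  have "covm M (\<lambda>\<omega>. u \<omega> - (\<Sum>k\<in>K. B k *v F k \<omega>)) h $ i $ j
      = (covm M u h - (\<Sum>k\<in>K. B k ** covm M (F k) h)) $ i $ j" for i j
  proof -
    have si: "square_integrable M (\<lambda>\<omega>. u \<omega> $ i)" "square_integrable M (\<lambda>\<omega>. h \<omega> $ j)"
      "\<And>k l. k \<in> K \<Longrightarrow> square_integrable M (\<lambda>\<omega>. F k \<omega> $ l)"
      using u h F unfolding L2vec_iff_components by auto
    have "covm M (\<lambda>\<omega>. u \<omega> - (\<Sum>k\<in>K. B k *v F k \<omega>)) h $ i $ j
       = cov M (\<lambda>\<omega>. u \<omega> $ i - (\<Sum>k\<in>K. \<Sum>l\<in>UNIV. B k $ i $ l * F k \<omega> $ l)) (\<lambda>\<omega>. h \<omega> $ j)"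
      by (simp add: covm_nth sum_component matrix_vector_mult_def)
    also have "\<dots> = cov M (\<lambda>\<omega>. u \<omega> $ i) (\<lambda>\<omega>. h \<omega> $ j)
        - (\<Sum>k\<in>K. \<Sum>l\<in>UNIV. B k $ i $ l * cov M (\<lambda>\<omega>. F k \<omega> $ l) (\<lambda>\<omega>. h \<omega> $ j))"
      using si by (simp add: cov_diff_left cov_sum_left cov_cmult_left square_integrable_sum
          square_integrable_cmult)
    also have "\<dots> = (covm M u h - (\<Sum>k\<in>K. B k ** covm M (F k) h)) $ i $ j"
      by (simp add: sum_component matrix_matrix_mult_def covm_nth)
    finally show ?thesis .
  qed
  then show ?thesis
    by (simp add: vec_eq_iff)
qed

lemma covm_mult_vector_nth:
  assumes "L2vec M u" "L2vec M w"
  shows "(covm M u w *v x) $ i = cov M (\<lambda>\<omega>. u \<omega> $ i) (\<lambda>\<omega>. x \<bullet> w \<omega>)"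
proof -
  have "cov M (\<lambda>\<omega>. x \<bullet> w \<omega>) (\<lambda>\<omega>. u \<omega> $ i)
      = (\<Sum>j\<in>UNIV. x $ j * cov M (\<lambda>\<omega>. w \<omega> $ j) (\<lambda>\<omega>. u \<omega> $ i))"
    using assms unfolding inner_vec_def L2vec_iff_components
    by (simp add: cov_sum_left cov_cmult_left square_integrable_cmult)
  then show ?thesis
    by (simp add: matrix_vector_mult_def covm_nth cov_commute mult.commute)
qed

lemma inner_covm_mult_vector:
  assumes "L2vec M w"
  shows "x \<bullet> (covm M w w *v x) = cov M (\<lambda>\<omega>. x \<bullet> w \<omega>) (\<lambda>\<omega>. x \<bullet> w \<omega>)"
proof -
  have "x \<bullet> (covm M w w *v x) = (\<Sum>i\<in>UNIV. x $ i * cov M (\<lambda>\<omega>. w \<omega> $ i) (\<lambda>\<omega>. x \<bullet> w \<omega>))"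
    by (simp add: inner_vec_def covm_mult_vector_nth[OF assms assms])
  also have "\<dots> = cov M (\<lambda>\<omega>. \<Sum>i\<in>UNIV. x $ i * w \<omega> $ i) (\<lambda>\<omega>. x \<bullet> w \<omega>)"
    using assms square_integrable_inner[OF assms] unfolding L2vec_iff_components
    by (simp add: cov_sum_left cov_cmult_left square_integrable_cmult)
  finally show ?thesis
    by (simp add: inner_vec_def)
qed

lemma covm_mult_vector_eq_0:
  assumes u: "L2vec M u" and w: "L2vec M w" and "covm M w w *v x = 0"
  shows "covm M u w *v x = 0"
proof -
  have "cov M (\<lambda>\<omega>. x \<bullet> w \<omega>) (\<lambda>\<omega>. x \<bullet> w \<omega>) = 0"
    using inner_covm_mult_vector[OF w, of x] \<open>covm M w w *v x = 0\<close> by simp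
  then have "cov M (\<lambda>\<omega>. u \<omega> $ i) (\<lambda>\<omega>. x \<bullet> w \<omega>) = 0" for i
    using u square_integrable_inner[OF w] unfolding L2vec_iff_components
    by (blast intro: cov_eq_0_if_cov_self_eq_0)
  then show ?thesis
    by (simp add: vec_eq_iff covm_mult_vector_nth[OF u w])
qed

lemma covm_mult_pinv_mult:
  assumes u: "L2vec M u" and w: "L2vec M w"
  shows "covm M u w ** pinv (covm M w w) ** covm M w w = covm M u w"
proof (rule matrix_eq[THEN iffD2, rule_format])
  fix y
  let ?C = "covm M w w"
  have "?C *v (y - (pinv ?C ** ?C) *v y) = 0"
    using matrix_mult_pinv_mult[of ?C]
    by (simp add: matrix_vector_mult_diff_distrib matrix_vector_mul_assoc matrix_mul_assoc)
  then have "covm M u w *v (y - (pinv ?C ** ?C) *v y) = 0"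
    by (rule covm_mult_vector_eq_0[OF u w])
  then show "(covm M u w ** pinv ?C ** ?C) *v y = covm M u w *v y"
    by (simp add: matrix_vector_mult_diff_distrib matrix_vector_mul_assoc matrix_mul_assoc)
qed

lemma covm_orthogonalization_step:
  assumes "covm_orthogonal M w K" "finite K" "L2vec M u" "j \<in> K"
  shows "covm M (\<lambda>\<omega>. u \<omega> - (\<Sum>k\<in>K.
             (covm M u (w k) ** pinv (covm M (w k) (w k))
              + B k ** (mat 1 - covm M (w k) (w k) ** pinv (covm M (w k) (w k))))
             *v w k \<omega>)) (w j) = 0"
    (is "covm M (\<lambda>\<omega>. u \<omega> - (\<Sum>k\<in>K. ?Z k *v w k \<omega>)) (w j) = 0")
proof -
  have w: "\<And>k. k \<in> K \<Longrightarrow> L2vec M (w k)"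
    using assms(1) by (simp add: covm_orthogonal_def)
  have "(\<Sum>k\<in>K - {j}. ?Z k ** covm M (w k) (w j)) = 0"
    using assms(1) \<open>j \<in> K\<close> by (intro sum.neutral) (auto simp: covm_orthogonal_def)
  then have "(\<Sum>k\<in>K. ?Z k ** covm M (w k) (w j)) = ?Z j ** covm M (w j) (w j)"
    by (simp add: sum.remove[OF \<open>finite K\<close> \<open>j \<in> K\<close>])
  also have "\<dots> = covm M u (w j)"
    using covm_mult_pinv_mult[OF \<open>L2vec M u\<close> w[OF \<open>j \<in> K\<close>]] by (rule pinv_general_solution_mult)
  finally show ?thesis
    using covm_diff_sum_left[where B = ?Z, OF \<open>L2vec M u\<close> w w[OF \<open>j \<in> K\<close>]] by simp
qed

lemma covm_orthogonal_insert:
  assumes orth: "covm_orthogonal M w K" and "finite K" "L2vec M u"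
    and w_j: "w j = (\<lambda>\<omega>. u \<omega> - (\<Sum>k\<in>K.
             (covm M u (w k) ** pinv (covm M (w k) (w k))
              + B k ** (mat 1 - covm M (w k) (w k) ** pinv (covm M (w k) (w k))))
             *v w k \<omega>))"
  shows "covm_orthogonal M w (insert j K)"
proof -
  have "L2vec M (w j)"
    unfolding w_j using orth \<open>L2vec M u\<close> by (intro L2vec_diff_sum) (auto simp: covm_orthogonal_def)
  moreover have new: "covm M (w j) (w k) = 0" if "k \<in> K" for k
    unfolding w_j using assms that by (intro covm_orthogonalization_step)
  moreover have "covm M (w k) (w j) = 0" if "k \<in> K" for k
    using new[OF that] covm_eq_0_commute by blast
  ultimately show ?thesis
    using orth by (auto simp: covm_orthogonal_def)
qed

end

theorem lemma3:
  fixes M :: "'a measure" and p :: nat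
    and u v :: "nat \<Rightarrow> 'a \<Rightarrow> real^'n"
    and A :: "nat \<Rightarrow> nat \<Rightarrow> real^'n^'n"
  assumes "prob_space M"
    and "\<And>i. i \<in> {1..p} \<Longrightarrow> L2vec M (u i)"
    and "v 1 = u 1"
    and "\<And>i. i \<in> {2..p} \<Longrightarrow>
           v i = (\<lambda>\<omega>. u i \<omega> - (\<Sum>k = 1..i - 1.
             (covm M (u i) (v k) ** pinv (covm M (v k) (v k))
              + A i k ** (mat 1 - covm M (v k) (v k) ** pinv (covm M (v k) (v k))))
             *v v k \<omega>))"
  shows "\<forall>i \<in> {1..p}. \<forall>j \<in> {1..p}. i \<noteq> j \<longrightarrow> covm M (v i) (v j) = 0"
proof -
  interpret prob_space M by fact
  have "covm_orthogonal M v {1..n}" if "n \<le> p" for n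
    using that
  proof (induction n)
    case 0
    then show ?case
      by (simp add: covm_orthogonal_def)
  next
    case (Suc n)
    show ?case
    proof (cases "n = 0")
      case True
      then show ?thesis
        using Suc.prems assms(2,3) by (simp add: covm_orthogonal_def)
    next
      case False
      then have "covm_orthogonal M v (insert (Suc n) {1..Suc n - 1})"
        using Suc assms(2)[of "Suc n"]
        by (intro covm_orthogonal_insert[OF _ _ _ assms(4)[of "Suc n"]]) auto
      then show ?thesis
        by (simp add: atLeastAtMostSuc_conv)
    qed
  qed
  from this[of p] show ?thesis
    by (simp add: covm_orthogonal_def)
qed

end
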